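(* Let $\phi$ be the characteristic function of the limiting Quicksort random variable $Y$, and for $p\ge0$ let $c_p:=\sup_{t\in\mathbb{R}}|t|^p|\phi(t)|\in[0,\infty]$. Then for every $0<p<1$, $$c_{2p}\le \frac{[\Gamma(1-p)]^2}{\Gamma(2-2p)}\,c_p^2 .$$
   Context: Let $g(u):=2u\ln u+2(1-u)\ln(1-u)+1$ for $u\in(0,1)$. The limiting Quicksort random variable $Y$ is the limit in distribution of $(X_n-\mathbf{E}X_n)/n$, where $X_n$ is the number of comparisons used by randomized Quicksort on $n$ distinct numbers; equivalently, its law is the unique law with $\mathbf{E}Y=0$ and finite variance satisfying $Y\overset{d}{=}UY+(1-U)Z+g(U)$, where on the right $U,Y,Z$ are independent, $Z\overset{d}{=}Y$ and $U$ is uniform on $(0,1)$. *)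

theory Defs
  imports "HOL-Probability.Probability"
begin

definition qs_g :: "real \<Rightarrow> real" where
  "qs_g u = 2 * u * ln u + 2 * (1 - u) * ln (1 - u) + 1"

definition unif01 :: "real measure" where
  "unif01 = uniform_measure lborel {0<..<1}"

text \<open>M is the law of the limiting Quicksort random variable Y: the unique law on the
  reals with mean 0 and finite variance satisfying
  Y =d U Y + (1-U) Z + g(U) with U, Y, Z independent, Z =d Y, U uniform on (0,1).\<close>
definition quicksort_limit_law :: "real measure \<Rightarrow> bool" where
  "quicksort_limit_law M \<longleftrightarrow>
     real_distribution M \<and>
     integrable M (\<lambda>x. x\<^sup>2) \<and>
     integral\<^sup>L M (\<lambda>x. x) = 0 \<and>
     distr (unif01 \<Otimes>\<^sub>M (M \<Otimes>\<^sub>M M)) borel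
        (\<lambda>(u, y, z). u * y + (1 - u) * z + qs_g u) = M"

definition qs_c :: "real measure \<Rightarrow> real \<Rightarrow> ennreal" where
  "qs_c M p = (SUP t\<in>UNIV. ennreal (\<bar>t\<bar> powr p * cmod (char M t)))"

end

(* Taking characteristic functions in the fixed-point equation and integrating out Y and Z first
   gives phi(t) = E[exp(i t g(U)) phi(t U) phi(t (1 - U))], so
   |phi(t)| <= int_0^1 |phi(t u)| |phi(t (1 - u))| du.  Bounding each factor by
   c_p |t u|^(-p) resp. c_p |t (1 - u)|^(-p) leaves
   |t|^(2p) |phi(t)| <= c_p^2 int_0^1 u^(-p) (1 - u)^(-p) du = c_p^2 B(1 - p, 1 - p),
   and B(1 - p, 1 - p) = Gamma(1 - p)^2 / Gamma(2 - 2p). *)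
theory Submission
  imports Defs
begin

lemma char_pair_affine:
  assumes "real_distribution M" and "real_distribution N"
  shows "(\<integral>w. iexp (t * (a * fst w + b * snd w + c)) \<partial>(M \<Otimes>\<^sub>M N))
        = iexp (t * c) * char M (t * a) * char N (t * b)"
proof -
  interpret M: real_distribution M by (rule assms(1))
  interpret N: real_distribution N by (rule assms(2))
  interpret P: pair_prob_space M N by unfold_locales
  have iexp_factor: "iexp (t * (a * y + b * z + c)) = iexp (t * c) * iexp ((t * a) * y) * iexp ((t * b) * z)"
    for y z :: real
    by (simp add: algebra_simps flip: exp_add)
  have "integrable (M \<Otimes>\<^sub>M N) (\<lambda>w. iexp (t * (a * fst w + b * snd w + c)))"
    by (rule P.integrable_const_bound[where B = 1]) (auto simp: norm_exp_i_times)
  then have "(\<integral>w. iexp (t * (a * fst w + b * snd w + c)) \<partial>(M \<Otimes>\<^sub>M N))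
      = (\<integral>y. \<integral>z. iexp (t * (a * y + b * z + c)) \<partial>N \<partial>M)"
    by (subst P.integral_fst'[symmetric]) simp_all
  also have "\<dots> = iexp (t * c) * char M (t * a) * char N (t * b)"
    unfolding iexp_factor char_def by simp
  finally show ?thesis .
qed

lemma sets_unif01 [measurable_cong]: "sets unif01 = sets borel"
  unfolding unif01_def by simp

lemma prob_space_unif01: "prob_space unif01"
  unfolding unif01_def by (rule prob_space_uniform_measure) auto

lemma nn_integral_unif01_Beta:
  assumes "0 < a" and "0 < b"
  shows "(\<integral>\<^sup>+u. ennreal (u powr (a - 1) * (1 - u) powr (b - 1)) \<partial>unif01) = ennreal (Beta a b)"
proof -
  let ?f = "\<lambda>u::real. u powr (a - 1) * (1 - u) powr (b - 1)"
  have "(?f has_integral Beta a b) {0<..<1}"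
    using has_integral_Beta_real[OF assms] by (simp add: has_integral_Icc_iff_Ioo)
  then have "(\<integral>\<^sup>+u. ennreal (?f u) * indicator {0<..<1} u \<partial>lborel) = ennreal (Beta a b)"
    by (rule nn_integral_has_integral_lebesgue'[rotated]) simp
  then show ?thesis
    unfolding unif01_def by (subst nn_integral_uniform_measure) (auto simp: divide_ennreal_def)
qed

lemma Beta_pos: "0 < a \<Longrightarrow> 0 < b \<Longrightarrow> 0 < Beta a (b :: real)"
  unfolding Beta_def by (simp add: Gamma_real_pos)

lemma norm_char_le_fixpoint:
  assumes M: "real_distribution M"
    and fixpoint: "distr (unif01 \<Otimes>\<^sub>M (M \<Otimes>\<^sub>M M)) borel
        (\<lambda>(u, y, z). u * y + (1 - u) * z + qs_g u) = M"
  shows "ennreal (norm (char M t))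
    \<le> (\<integral>\<^sup>+u. ennreal (norm (char M (t * u)) * norm (char M (t * (1 - u)))) \<partial>unif01)"
proof -
  interpret M: real_distribution M by (rule M)
  interpret P: pair_prob_space M M by unfold_locales
  interpret U: prob_space unif01 by (rule prob_space_unif01)
  interpret Q: pair_prob_space unif01 "M \<Otimes>\<^sub>M M" by unfold_locales
  have [measurable]: "qs_g \<in> borel_measurable borel" unfolding qs_g_def by measurable
  define f where "f x = iexp (t * (fst x * fst (snd x) + (1 - fst x) * snd (snd x) + qs_g (fst x)))"
    for x :: "real \<times> real \<times> real"
  have f_int: "integrable (unif01 \<Otimes>\<^sub>M (M \<Otimes>\<^sub>M M)) f"
    unfolding f_def by (rule Q.integrable_const_bound[where B = 1]) auto
  have inner: "(\<integral>w. f (u, w) \<partial>(M \<Otimes>\<^sub>M M)) = iexp (t * qs_g u) * char M (t * u) * char M (t * (1 - u))"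
    for u
    unfolding f_def using char_pair_affine[OF M M, of t u "1 - u" "qs_g u"] by simp
  have "char M t = (\<integral>x. f x \<partial>(unif01 \<Otimes>\<^sub>M (M \<Otimes>\<^sub>M M)))"
    by (subst (1) fixpoint [symmetric]) (simp add: char_def f_def[abs_def] integral_distr split_beta')
  also have "\<dots> = (\<integral>u. (\<integral>w. f (u, w) \<partial>(M \<Otimes>\<^sub>M M)) \<partial>unif01)"
    using Q.integral_fst'[OF f_int] by simp
  finally have "ennreal (norm (char M t)) \<le> (\<integral>\<^sup>+u. norm (\<integral>w. f (u, w) \<partial>(M \<Otimes>\<^sub>M M)) \<partial>unif01)"
    using integral_norm_bound_ennreal Q.integrable_fst'[OF f_int] by simp
  then show ?thesis
    unfolding inner by (simp add: norm_mult)
qed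

lemma norm_char_le_qs_c:
  assumes "qs_c M p = ennreal c" and "0 \<le> c" and "s \<noteq> 0"
  shows "norm (char M s) \<le> c * \<bar>s\<bar> powr (- p)"
proof -
  have "ennreal (\<bar>s\<bar> powr p * norm (char M s)) \<le> qs_c M p"
    unfolding qs_c_def by (rule SUP_upper) simp
  then have "\<bar>s\<bar> powr p * norm (char M s) \<le> c"
    using assms(1,2) by (simp add: ennreal_le_iff)
  then show ?thesis
    using assms(3) by (simp add: powr_minus field_simps)
qed

lemma powr_norm_char_le_Beta:
  assumes M: "real_distribution M"
    and fixpoint: "distr (unif01 \<Otimes>\<^sub>M (M \<Otimes>\<^sub>M M)) borel
        (\<lambda>(u, y, z). u * y + (1 - u) * z + qs_g u) = M"
    and p: "0 < p" "p < 1" and c: "qs_c M p = ennreal c" "0 \<le> c" and "t \<noteq> 0"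
  shows "\<bar>t\<bar> powr (2 * p) * norm (char M t) \<le> c\<^sup>2 * Beta (1 - p) (1 - p)"
proof -
  define C where "C = c\<^sup>2 * \<bar>t\<bar> powr (- 2 * p)"
  have "0 \<le> C" unfolding C_def by simp
  have factor_bound: "norm (char M (t * u)) * norm (char M (t * (1 - u)))
      \<le> C * (u powr (- p) * (1 - u) powr (- p))"
    if u: "0 < u" "u < 1" for u
  proof -
    have "norm (char M (t * u)) * norm (char M (t * (1 - u)))
        \<le> (c * \<bar>t * u\<bar> powr (- p)) * (c * \<bar>t * (1 - u)\<bar> powr (- p))"
      using u \<open>t \<noteq> 0\<close> c by (intro mult_mono norm_char_le_qs_c) auto
    also have "\<dots> = C * (u powr (- p) * (1 - u) powr (- p))"
      using u by (simp add: C_def abs_mult powr_mult power2_eq_square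
          flip: powr_add del: right_diff_distrib right_diff_distrib')
    finally show ?thesis .
  qed
  have "ennreal (norm (char M t))
      \<le> (\<integral>\<^sup>+u. ennreal (norm (char M (t * u)) * norm (char M (t * (1 - u)))) \<partial>unif01)"
    by (rule norm_char_le_fixpoint[OF M fixpoint])
  also have "\<dots> \<le> (\<integral>\<^sup>+u. ennreal C * ennreal (u powr (- p) * (1 - u) powr (- p)) \<partial>unif01)"
    unfolding unif01_def
    by (intro nn_integral_mono_AE AE_uniform_measureI AE_I2)
      (auto simp: \<open>0 \<le> C\<close> factor_bound ennreal_mult'[symmetric] intro!: ennreal_leI)
  also have "\<dots> = ennreal (C * Beta (1 - p) (1 - p))"
    using nn_integral_unif01_Beta[of "1 - p" "1 - p"] p \<open>0 \<le> C\<close>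
    by (simp add: nn_integral_cmult ennreal_mult')
  finally have "norm (char M t) \<le> C * Beta (1 - p) (1 - p)"
    using \<open>0 \<le> C\<close> Beta_pos[of "1 - p" "1 - p"] p by (subst (asm) ennreal_le_iff) auto
  then have "\<bar>t\<bar> powr (2 * p) * norm (char M t) \<le> \<bar>t\<bar> powr (2 * p) * (C * Beta (1 - p) (1 - p))"
    by (intro mult_left_mono) auto
  also have "\<dots> = c\<^sup>2 * Beta (1 - p) (1 - p)"
    unfolding C_def using \<open>t \<noteq> 0\<close> by (simp add: algebra_simps flip: powr_add)
  finally show ?thesis .
qed

lemma qs_c_double_le_Beta:
  assumes M: "real_distribution M"
    and fixpoint: "distr (unif01 \<Otimes>\<^sub>M (M \<Otimes>\<^sub>M M)) borel
        (\<lambda>(u, y, z). u * y + (1 - u) * z + qs_g u) = M"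
    and p: "0 < p" "p < 1"
  shows "qs_c M (2 * p) \<le> ennreal (Beta (1 - p) (1 - p)) * (qs_c M p)\<^sup>2"
proof (cases "qs_c M p" rule: ennreal_cases)
  case (real c)
  have "qs_c M (2 * p) \<le> ennreal (c\<^sup>2 * Beta (1 - p) (1 - p))"
    unfolding qs_c_def
  proof (rule SUP_least)
    fix t :: real
    show "ennreal (\<bar>t\<bar> powr (2 * p) * norm (char M t)) \<le> ennreal (c\<^sup>2 * Beta (1 - p) (1 - p))"
      using powr_norm_char_le_Beta[OF M fixpoint p real(2,1)] by (cases "t = 0") (auto intro: ennreal_leI)
  qed
  then show ?thesis
    using real Beta_pos[of "1 - p" "1 - p"] p by (simp add: ennreal_mult' ennreal_power mult.commute)
next
  case top
  then show ?thesis
    using Beta_pos[of "1 - p" "1 - p"] p by (simp add: power2_eq_square ennreal_mult_top)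
qed

theorem lemma2p5:
  fixes M :: "real measure" and p :: real
  assumes "quicksort_limit_law M"
    and "0 < p" and "p < 1"
  shows "qs_c M (2 * p) \<le> ennreal ((Gamma (1 - p))\<^sup>2 / Gamma (2 - 2 * p)) * (qs_c M p)\<^sup>2"
proof -
  have "(Gamma (1 - p))\<^sup>2 / Gamma (2 - 2 * p) = Beta (1 - p) (1 - p)"
    unfolding Beta_def by (simp add: power2_eq_square)
  moreover have "qs_c M (2 * p) \<le> ennreal (Beta (1 - p) (1 - p)) * (qs_c M p)\<^sup>2"
    using assms unfolding quicksort_limit_law_def by (intro qs_c_double_le_Beta) auto
  ultimately show ?thesis by simp
qed

end
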